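(* Let $\lambda>0$ and let $H_3=\mathbb{R}^3$ with coordinates $(x,y,z)$ carry the Lorentzian metric $g_2=\frac{1}{\lambda^2}dx^2+dy^2-(x\,dy+dz)^2$, with Levi-Civita connection $\nabla$. Let $e_1=\partial_y-x\partial_z$, $e_2=\lambda\partial_x$, $e_3=\partial_z$, and let $V_2=\partial_y\,(=e_1+xe_3)$. Then every $V_2$-magnetic curve $\gamma(t)=(x(t),y(t),z(t))$, i.e. every smooth curve with $\nabla_{\gamma'}\gamma'=V_2\wedge\gamma'$, satisfies the system $y''-x'(z'+xy')=-\frac{xx'}{\lambda}$, $(\lambda y'+1)(z'+xy')=xy'-\frac{x''}{\lambda}$, $(z'+xy')'=-\frac{x'}{\lambda}$.
   Context: $(e_1,e_2,e_3)$ is a $g_2$-orthonormal frame with $e_3$ timelike. For $X=\sum X^ie_i$, $Y=\sum Y^ie_i$ the vector product is defined in this frame by $X\wedge Y=(X^2Y^3-X^3Y^2)e_1+(X^3Y^1-X^1Y^3)e_2+(X^2Y^1-X^1Y^2)e_3$. Primes denote derivatives in $t$. *)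

theory Defs
  imports "HOL-Analysis.Analysis"
begin

text \<open>Points of R^3 are vectors in real^3; coordinates x = p$1, y = p$2, z = p$3.
  The coordinate fields d/dx, d/dy, d/dz are axis 1 1, axis 2 1, axis 3 1.\<close>

definition coord3 :: "real \<Rightarrow> real \<Rightarrow> real \<Rightarrow> real^3" where
  "coord3 a b c = vector [a, b, c]"

definition g2 :: "real \<Rightarrow> real^3 \<Rightarrow> real^3 \<Rightarrow> real^3 \<Rightarrow> real" where
  "g2 lam p u v = (u$1) * (v$1) / lam^2 + (u$2) * (v$2)
     - (p$1 * u$2 + u$3) * (p$1 * v$2 + v$3)"

definition metric_matrix :: "(real^3 \<Rightarrow> real^3 \<Rightarrow> real^3 \<Rightarrow> real) \<Rightarrow> real^3 \<Rightarrow> real^3^3" where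
  "metric_matrix G p = (\<chi> i j. G p (axis i 1) (axis j 1))"

definition pdiff :: "(real^3 \<Rightarrow> real) \<Rightarrow> 3 \<Rightarrow> real^3 \<Rightarrow> real" where
  "pdiff f i p = deriv (\<lambda>t. f (p + t *\<^sub>R axis i 1)) 0"

definition christoffel :: "(real^3 \<Rightarrow> real^3 \<Rightarrow> real^3 \<Rightarrow> real) \<Rightarrow> 3 \<Rightarrow> 3 \<Rightarrow> 3 \<Rightarrow> real^3 \<Rightarrow> real" where
  "christoffel G k i j p = (1/2) * (\<Sum>l\<in>UNIV. matrix_inv (metric_matrix G p) $ k $ l *
      (pdiff (\<lambda>q. metric_matrix G q $ j $ l) i p + pdiff (\<lambda>q. metric_matrix G q $ i $ l) j p
       - pdiff (\<lambda>q. metric_matrix G q $ i $ j) l p))"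

text \<open>Covariant acceleration nabla_{c'} c' of a curve c with velocity c' and
  (ordinary) second derivative c'', in coordinates.\<close>
definition cov_acc :: "(real^3 \<Rightarrow> real^3 \<Rightarrow> real^3 \<Rightarrow> real) \<Rightarrow> (real \<Rightarrow> real^3) \<Rightarrow>
    (real \<Rightarrow> real^3) \<Rightarrow> (real \<Rightarrow> real^3) \<Rightarrow> real \<Rightarrow> real^3" where
  "cov_acc G c c' c'' t = (\<chi> k. c'' t $ k +
      (\<Sum>i\<in>UNIV. \<Sum>j\<in>UNIV. christoffel G k i j (c t) * (c' t $ i) * (c' t $ j)))"

definition frame :: "real \<Rightarrow> real^3 \<Rightarrow> 3 \<Rightarrow> real^3" where
  "frame lam p i = (if i = 1 then axis 2 1 - (p$1) *\<^sub>R axis 3 1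
                    else if i = 2 then lam *\<^sub>R axis 1 1
                    else axis 3 1)"

definition frame_comp :: "(3 \<Rightarrow> real^3) \<Rightarrow> real^3 \<Rightarrow> real^3" where
  "frame_comp E X = (THE c. X = (\<Sum>i\<in>UNIV. (c$i) *\<^sub>R E i))"

definition wedge :: "(3 \<Rightarrow> real^3) \<Rightarrow> real^3 \<Rightarrow> real^3 \<Rightarrow> real^3" where
  "wedge E X Y = (let a = frame_comp E X; b = frame_comp E Y in
      (a$2 * b$3 - a$3 * b$2) *\<^sub>R E 1 + (a$3 * b$1 - a$1 * b$3) *\<^sub>R E 2
      + (a$2 * b$1 - a$1 * b$2) *\<^sub>R E 3)"

definition V2 :: "real^3 \<Rightarrow> real^3" where
  "V2 p = axis 2 1"

end

(* In coordinates the magnetic equation is a pointwise identity between position, velocity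
   and acceleration.  Only the entries
   g22 = 1 - x^2 and g23 = -x of g2 vary, and only in x, which makes the Christoffel symbols
   and hence the covariant acceleration explicit; the wedge with V2 is read off from the
   frame components.  Comparing components gives the first two equations, and the third
   is the z-component plus x times the y-component. *)
theory Submission
  imports Defs
begin

lemma matrix_inv_eqI:
  fixes A :: "'a::semiring_1^'n^'m" and B :: "'a^'m^'n"
  assumes "A ** B = mat 1" "B ** A = mat 1"
  shows "matrix_inv A = B"
proof -
  define C where "C = matrix_inv A"
  have C: "A ** C = mat 1" "C ** A = mat 1"
    using someI[of "\<lambda>A'. A ** A' = mat 1 \<and> A' ** A = mat 1", OF conjI, OF assms]
    unfolding C_def matrix_inv_def by auto
  have "C = C ** (A ** B)" using assms by simp
  also have "\<dots> = (C ** A) ** B" by (simp add: matrix_mul_assoc)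
  also have "\<dots> = B" using C by simp
  finally show ?thesis unfolding C_def .
qed

lemma axis_nth_if: "axis i a $ k = (if k = i then a else 0)"
  by (simp add: axis_def)

lemma metric_matrix_g2:
  "metric_matrix (g2 lam) p =
     vector [vector [1/lam^2, 0, 0], vector [0, 1 - (p$1)^2, - p$1], vector [0, - p$1, -1]]"
  by (simp add: vec_eq_iff forall_3 metric_matrix_def g2_def axis_nth_if power2_eq_square)

lemma matrix_inv_metric_matrix_g2:
  assumes "lam \<noteq> 0"
  shows "matrix_inv (metric_matrix (g2 lam) p) =
     vector [vector [lam^2, 0, 0], vector [0, 1, - p$1], vector [0, - p$1, (p$1)^2 - 1]]"
  unfolding metric_matrix_g2 using assms
  by (intro matrix_inv_eqI)
     (auto simp: vec_eq_iff forall_3 matrix_matrix_mult_def sum_3 mat_def algebra_simps power2_eq_square)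

lemma pdiff_metric_matrix_g2:
  "pdiff (\<lambda>q. metric_matrix (g2 lam) q $ j $ l) i p =
     (if i = 1 then vector [vector [0, 0, 0], vector [0, -2 * p$1, -1], vector [0, -1, 0]] $ j $ l
      else 0)"
proof -
  define e where "e = (if i = 1 then 1 else 0::real)"
  define aj where "aj = (if j = 2 then 1 else 0::real)"
  define bj where "bj = (if j = 3 then 1 else 0::real)"
  define al where "al = (if l = 2 then 1 else 0::real)"
  define bl where "bl = (if l = 3 then 1 else 0::real)"
  define C where "C = (if j = 1 \<and> l = 1 then 1/lam^2 else 0) + (if j = 2 \<and> l = 2 then 1 else (0::real))"
  have entry: "(\<lambda>t. metric_matrix (g2 lam) (p + t *\<^sub>R axis i 1) $ j $ l) =
      (\<lambda>t. C - ((p$1 + t*e)*aj + bj) * ((p$1 + t*e)*al + bl))"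
    by (auto simp: metric_matrix_def g2_def axis_nth_if e_def aj_def bj_def al_def bl_def C_def fun_eq_iff)
  have "((\<lambda>t. C - ((p$1 + t*e)*aj + bj) * ((p$1 + t*e)*al + bl)) has_real_derivative
      - e * (aj*(p$1*al + bl) + (p$1*aj + bj)*al)) (at 0)"
    by (auto intro!: derivative_eq_intros simp: algebra_simps)
  then have "pdiff (\<lambda>q. metric_matrix (g2 lam) q $ j $ l) i p = - e * (aj*(p$1*al + bl) + (p$1*aj + bj)*al)"
    unfolding pdiff_def entry by (rule DERIV_imp_deriv)
  then show ?thesis
    using exhaust_3[of j] exhaust_3[of l] by (auto simp: e_def aj_def bj_def al_def bl_def)
qed

lemma cov_acc_g2:
  assumes "lam \<noteq> 0"
  shows "cov_acc (g2 lam) c c' c'' t =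
    (let p = c t; v = c' t; a = c'' t in
       vector [a$1 + lam^2 * (p$1 * (v$2)^2 + v$2 * v$3),
               a$2 - p$1 * v$1 * v$2 - v$1 * v$3,
               a$3 + (p$1)^2 * v$1 * v$2 + p$1 * v$1 * v$3 + v$1 * v$2])"
  using assms
  by (simp add: vec_eq_iff forall_3 cov_acc_def christoffel_def pdiff_metric_matrix_g2
      matrix_inv_metric_matrix_g2 sum_3 Let_def)
     (simp add: algebra_simps power2_eq_square)

lemma frame_comp_frame:
  assumes "lam \<noteq> 0"
  shows "frame_comp (frame lam p) v = vector [v$2, v$1 / lam, v$3 + p$1 * v$2]"
  unfolding frame_comp_def
proof (rule the_equality)
  show "v = (\<Sum>i\<in>UNIV. (vector [v$2, v$1 / lam, v$3 + p$1 * v$2] $ i) *\<^sub>R frame lam p i)"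
    using assms by (simp add: vec_eq_iff forall_3 sum_3 frame_def axis_nth_if)
next
  fix c :: "real^3"
  assume "v = (\<Sum>i\<in>UNIV. (c$i) *\<^sub>R frame lam p i)"
  then have "v$1 = lam * c$2" "v$2 = c$1" "v$3 = c$3 - p$1 * c$1"
    by (simp_all add: sum_3 frame_def axis_nth_if)
  then show "c = vector [v$2, v$1 / lam, v$3 + p$1 * v$2]"
    using assms by (simp add: vec_eq_iff forall_3)
qed

lemma wedge_frame_V2:
  assumes "lam \<noteq> 0"
  shows "wedge (frame lam p) (V2 p) v = vector [- lam * v$3, - p$1 * v$1 / lam, ((p$1)^2 - 1) * v$1 / lam]"
  using assms
  by (simp add: vec_eq_iff forall_3 wedge_def frame_comp_frame frame_def V2_def axis_nth_if Let_def)
     (simp add: algebra_simps power2_eq_square diff_divide_distrib)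

theorem mainTheorem6:
  fixes lam :: real and I :: "real set"
    and x y z x' y' z' x'' y'' z'' :: "real \<Rightarrow> real"
  assumes lam: "lam > 0"
    and I: "open I"
    and dx: "\<And>t. t \<in> I \<Longrightarrow> (x has_real_derivative x' t) (at t)"
    and dy: "\<And>t. t \<in> I \<Longrightarrow> (y has_real_derivative y' t) (at t)"
    and dz: "\<And>t. t \<in> I \<Longrightarrow> (z has_real_derivative z' t) (at t)"
    and dx': "\<And>t. t \<in> I \<Longrightarrow> (x' has_real_derivative x'' t) (at t)"
    and dy': "\<And>t. t \<in> I \<Longrightarrow> (y' has_real_derivative y'' t) (at t)"
    and dz': "\<And>t. t \<in> I \<Longrightarrow> (z' has_real_derivative z'' t) (at t)"
    and magnetic: "\<And>t. t \<in> I \<Longrightarrow>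
      cov_acc (g2 lam) (\<lambda>s. coord3 (x s) (y s) (z s)) (\<lambda>s. coord3 (x' s) (y' s) (z' s))
              (\<lambda>s. coord3 (x'' s) (y'' s) (z'' s)) t
      = wedge (frame lam (coord3 (x t) (y t) (z t))) (V2 (coord3 (x t) (y t) (z t)))
              (coord3 (x' t) (y' t) (z' t))"
    and t: "t \<in> I"
  shows "y'' t - x' t * (z' t + x t * y' t) = - (x t * x' t) / lam
    \<and> (lam * y' t + 1) * (z' t + x t * y' t) = x t * y' t - x'' t / lam
    \<and> z'' t + x' t * y' t + x t * y'' t = - x' t / lam"
proof -
  have "lam \<noteq> 0" using lam by simp
  then have "vector [x'' t + lam^2 * (x t * (y' t)^2 + y' t * z' t),
                     y'' t - x t * x' t * y' t - x' t * z' t,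
                     z'' t + (x t)^2 * x' t * y' t + x t * x' t * z' t + x' t * y' t]
           = (vector [- lam * z' t, - x t * x' t / lam, ((x t)^2 - 1) * x' t / lam] :: real^3)"
    using magnetic[OF t] by (simp add: cov_acc_g2 wedge_frame_V2 coord3_def)
  then have comp_x: "x'' t + lam^2 * (x t * (y' t)^2 + y' t * z' t) = - lam * z' t"
    and comp_y: "y'' t - x t * x' t * y' t - x' t * z' t = - x t * x' t / lam"
    and comp_z: "z'' t + (x t)^2 * x' t * y' t + x t * x' t * z' t + x' t * y' t = ((x t)^2 - 1) * x' t / lam"
    by (simp_all add: vec_eq_iff forall_3)
  show ?thesis
  proof (intro conjI)
    show "y'' t - x' t * (z' t + x t * y' t) = - (x t * x' t) / lam"
      using comp_y by (simp add: algebra_simps)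
    show "(lam * y' t + 1) * (z' t + x t * y' t) = x t * y' t - x'' t / lam"
      using comp_x lam by (simp add: field_simps power2_eq_square)
    have "z'' t + x' t * y' t + x t * y'' t
        = (z'' t + (x t)^2 * x' t * y' t + x t * x' t * z' t + x' t * y' t)
          + x t * (y'' t - x t * x' t * y' t - x' t * z' t)"
      by (simp add: algebra_simps power2_eq_square)
    also have "\<dots> = ((x t)^2 - 1) * x' t / lam + x t * (- x t * x' t / lam)"
      by (simp only: comp_y comp_z)
    also have "\<dots> = - x' t / lam"
      using lam by (simp add: field_simps power2_eq_square)
    finally show "z'' t + x' t * y' t + x t * y'' t = - x' t / lam" .
  qed
qed

end
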